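(* Let $\rho\in\mathfrak M_d$, let $h$ be an interior point of $\mathcal H$ and let $k\in\mathcal H$. Then: (i) $\int y\,\eta_h(dy)=0$; (ii) for every bounded measurable $\varphi:\mathbb R^{d-1}\to\mathbb R$, $$\int\varphi(z)\,\eta_k(dz)=\int_{\{y:\,1+(k-h)^\top y>0\}}\varphi\Big(\frac{y}{1+(k-h)^\top y}\Big)\bigl(1+(k-h)^\top y\bigr)\,\eta_h(dy);$$ (iii) $\eta_h$ has bounded support.
   Context: Fix an integer $d\ge 2$. Let $H\in\mathbb R^{d\times(d-1)}$ have orthonormal columns spanning $T_d:=\{u\in\mathbb R^d:\mathbf 1^\top u=0\}$, and set $\gamma_i:=H^\top e_i\in\mathbb R^{d-1}$ ($i=1,\dots,d$). Let $\mathcal X_d:=\{x\in\mathbb R^{d-1}:1+\gamma_i^\top x\ge0\ \forall i\}$ and $\mathcal H:=\mathrm{conv}\{\gamma_1,\dots,\gamma_d\}$. An anchored law is a Borel probability measure $\rho$ on $\mathcal X_d$ with $\int x\,\rho(dx)=0$; $\mathfrak M_d$ is the set of anchored laws. For $h\in\mathcal H$ let $A_h:=\{x\in\mathcal X_d:1+h^\top x>0\}$ and $T_h(x):=x/(1+h^\top x)$ on $A_h$. For $\rho\in\mathfrak M_d$ and $h\in\mathcal H$, $q_h(dx):=(1+h^\top x)\rho(dx)$ is a probability measure (it vanishes outside $A_h$), and the projective fiber is the pushforward $\eta_h:=(T_h)_\#q_h$. *)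

theory Defs
  imports "HOL-Probability.Probability"
begin

text \<open>Dimension conventions: vectors of R^(d-1) have type real^'n, vectors of R^d
  have type real^'m, with CARD('m) = CARD('n) + 1 (so d = CARD('m) \<ge> 2).
  H :: real^'n^'m is the d x (d-1) matrix (rows indexed by 'm, columns by 'n).\<close>

definition gam :: "real^'n^'m \<Rightarrow> 'm \<Rightarrow> real^'n" where
  "gam H i = transpose H *v axis i 1"

definition Xd :: "real^'n^'m \<Rightarrow> (real^'n) set" where
  "Xd H = {x. \<forall>i. 1 + gam H i \<bullet> x \<ge> 0}"

definition Hcal :: "real^'n^'m \<Rightarrow> (real^'n) set" where
  "Hcal H = convex hull (range (gam H))"

definition admissible_H :: "real^'n^'m \<Rightarrow> bool" where
  "admissible_H H \<longleftrightarrow> transpose H ** H = mat 1 \<and>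
     span (range (\<lambda>j. column j H)) = {u. (\<Sum>i\<in>UNIV. u $ i) = 0}"

definition anchored :: "real^'n^'m \<Rightarrow> (real^'n) measure \<Rightarrow> bool" where
  "anchored H \<rho> \<longleftrightarrow> prob_space \<rho> \<and> sets \<rho> = sets borel \<and>
     (AE x in \<rho>. x \<in> Xd H) \<and> has_bochner_integral \<rho> (\<lambda>x. x) 0"

definition Ah :: "real^'n^'m \<Rightarrow> real^'n \<Rightarrow> (real^'n) set" where
  "Ah H h = {x \<in> Xd H. 1 + h \<bullet> x > 0}"

text \<open>T_h; its value outside A_h is irrelevant since q_h vanishes there.\<close>
definition Th :: "real^'n \<Rightarrow> real^'n \<Rightarrow> real^'n" where
  "Th h x = (if 1 + h \<bullet> x > 0 then (1 / (1 + h \<bullet> x)) *\<^sub>R x else 0)"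

definition qh :: "(real^'n) measure \<Rightarrow> real^'n \<Rightarrow> (real^'n) measure" where
  "qh \<rho> h = density \<rho> (\<lambda>x. ennreal (1 + h \<bullet> x))"

definition eta :: "(real^'n) measure \<Rightarrow> real^'n \<Rightarrow> (real^'n) measure" where
  "eta \<rho> h = distr (qh \<rho> h) borel (Th h)"

definition has_bounded_support :: "('a::metric_space) measure \<Rightarrow> bool" where
  "has_bounded_support M \<longleftrightarrow> (\<exists>B. bounded B \<and> (AE x in M. x \<in> B))"

end

theory Submission
  imports Defs
begin

text \<open>For x \<in> X_d the map g \<mapsto> 1 + g \<bullet> x is affine and nonnegative at the vertices \<gamma>_i,
  hence on all of \<H>. If a ball of radius e around h lies in \<H>, evaluating at
  g = h - e x / |x| gives 1 + h \<bullet> x \<ge> e |x|: the weight of q_h is positive on X_d and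
  |T_h x| \<le> 1/e, which is (iii). Since (1 + h \<bullet> x) T_h x = x, the mean of \<eta>_h is the
  mean of \<rho>, which is (i). For (ii), pull both sides back to \<rho>-integrals and use
  1 + (k - h) \<bullet> T_h x = (1 + k \<bullet> x) / (1 + h \<bullet> x), so that T_{k-h} (T_h x) = T_k x.\<close>

lemma Hcal_inner_Xd_nonneg:
  assumes "g \<in> Hcal H" "x \<in> Xd H"
  shows "0 \<le> 1 + g \<bullet> x"
proof -
  have "{g. 0 \<le> 1 + g \<bullet> x} = {g. x \<bullet> g \<ge> -1}"
    by (auto simp: inner_commute)
  then have "convex {g. 0 \<le> 1 + g \<bullet> x}"
    by (simp add: convex_halfspace_ge)
  moreover have "range (gam H) \<subseteq> {g. 0 \<le> 1 + g \<bullet> x}"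
    using assms(2) by (auto simp: Xd_def)
  ultimately have "Hcal H \<subseteq> {g. 0 \<le> 1 + g \<bullet> x}"
    unfolding Hcal_def by (rule hull_minimal[rotated])
  then show ?thesis
    using assms(1) by auto
qed

lemma interior_Hcal_inner_Xd_lower_bound:
  assumes "h \<in> interior (Hcal H)"
  obtains e where "e > 0" "\<And>x. x \<in> Xd H \<Longrightarrow> e * norm x \<le> 1 + h \<bullet> x"
proof -
  obtain e where e: "e > 0" "cball h e \<subseteq> Hcal H"
    using assms mem_interior_cball by blast
  have "e * norm x \<le> 1 + h \<bullet> x" if x: "x \<in> Xd H" for x
  proof (cases "x = 0")
    case False
    let ?g = "h - (e / norm x) *\<^sub>R x"
    have "?g \<in> Hcal H"
      using e False by (auto simp: dist_norm)
    then have "0 \<le> 1 + ?g \<bullet> x"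
      using x by (rule Hcal_inner_Xd_nonneg)
    also have "?g \<bullet> x = h \<bullet> x - e * norm x"
      using False by (simp add: inner_diff_left power2_norm_eq_inner[symmetric] power2_eq_square)
    finally show ?thesis by simp
  qed simp
  then show ?thesis
    using e that by blast
qed

lemma pos_if_norm_le_affine:
  fixes g x :: "'a::real_inner"
  assumes "e > 0" "e * norm x \<le> 1 + g \<bullet> x"
  shows "0 < 1 + g \<bullet> x"
  using assms by (cases "x = 0") (auto intro: less_le_trans[of 0 "e * norm x"])

lemma Th_measurable [measurable]: "Th g \<in> borel_measurable borel"
  unfolding Th_def by measurable

lemma scaleR_Th:
  assumes "0 < 1 + g \<bullet> x"
  shows "(1 + g \<bullet> x) *\<^sub>R Th g x = x"
  using assms by (simp add: Th_def)

lemma inner_diff_Th: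
  assumes "0 < 1 + h \<bullet> x"
  shows "1 + (k - h) \<bullet> Th h x = (1 + k \<bullet> x) / (1 + h \<bullet> x)"
  using assms by (simp add: Th_def inner_diff_left field_simps)

lemma norm_Th_le:
  assumes "e > 0" "e * norm x \<le> 1 + g \<bullet> x"
  shows "norm (Th g x) \<le> 1 / e"
proof -
  have pos: "0 < 1 + g \<bullet> x"
    using assms by (rule pos_if_norm_le_affine)
  then have "norm (Th g x) = norm x / (1 + g \<bullet> x)"
    by (simp add: Th_def)
  also have "\<dots> \<le> 1 / e"
    using assms pos by (simp add: divide_simps mult.commute)
  finally show ?thesis .
qed

lemma integral_eta:
  fixes \<phi> :: "real^'n \<Rightarrow> 'b::{banach, second_countable_topology}"
  assumes [measurable_cong]: "sets \<rho> = sets borel"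
    and [measurable]: "\<phi> \<in> borel_measurable borel"
    and "AE x in \<rho>. 0 \<le> 1 + g \<bullet> x"
  shows "(\<integral>y. \<phi> y \<partial>eta \<rho> g) = (\<integral>x. (1 + g \<bullet> x) *\<^sub>R \<phi> (Th g x) \<partial>\<rho>)"
  unfolding eta_def qh_def
  by (subst integral_distr) (simp_all add: integral_density assms(3))

lemma has_bochner_integral_eta:
  fixes \<phi> :: "real^'n \<Rightarrow> 'b::{banach, second_countable_topology}"
  assumes [measurable_cong]: "sets \<rho> = sets borel"
    and [measurable]: "\<phi> \<in> borel_measurable borel"
    and "AE x in \<rho>. 0 \<le> 1 + g \<bullet> x"
    and "has_bochner_integral \<rho> (\<lambda>x. (1 + g \<bullet> x) *\<^sub>R \<phi> (Th g x)) I"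
  shows "has_bochner_integral (eta \<rho> g) \<phi> I"
  unfolding eta_def qh_def
  by (intro has_bochner_integral_distr has_bochner_integral_density) (simp_all add: assms(3,4))

lemma has_bochner_integral_eta_mean:
  assumes sets [measurable_cong]: "sets \<rho> = sets borel"
    and pos: "AE x in \<rho>. 0 < 1 + g \<bullet> x"
    and mean: "has_bochner_integral \<rho> (\<lambda>x. x) m"
  shows "has_bochner_integral (eta \<rho> g) (\<lambda>y. y) m"
proof (rule has_bochner_integral_eta[OF sets])
  show "AE x in \<rho>. 0 \<le> 1 + g \<bullet> x"
    using pos by eventually_elim simp
  have "AE x in \<rho>. x = (1 + g \<bullet> x) *\<^sub>R Th g x"
    using pos by eventually_elim (simp add: scaleR_Th)
  then show "has_bochner_integral \<rho> (\<lambda>x. (1 + g \<bullet> x) *\<^sub>R Th g x) m"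
    using mean by (rule has_bochner_integral_cong_AE[THEN iffD1, rotated 2]) simp_all
qed simp_all

lemma integral_eta_change_center:
  fixes \<phi> :: "real^'n \<Rightarrow> real"
  assumes sets [measurable_cong]: "sets \<rho> = sets borel"
    and [measurable]: "\<phi> \<in> borel_measurable borel"
    and hpos: "AE x in \<rho>. 0 < 1 + h \<bullet> x"
    and knonneg: "AE x in \<rho>. 0 \<le> 1 + k \<bullet> x"
  shows "(\<integral>z. \<phi> z \<partial>eta \<rho> k) =
    (LINT y:{y. 1 + (k - h) \<bullet> y > 0}|eta \<rho> h.
      \<phi> ((1 / (1 + (k - h) \<bullet> y)) *\<^sub>R y) * (1 + (k - h) \<bullet> y))"
proof -
  define S where "S = {y. 1 + (k - h) \<bullet> y > 0}"
  define \<psi> where "\<psi> y = indicator S y *\<^sub>R (\<phi> ((1 / (1 + (k - h) \<bullet> y)) *\<^sub>R y) * (1 + (k - h) \<bullet> y))"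
    for y
  have [measurable]: "\<psi> \<in> borel_measurable borel"
    unfolding \<psi>_def S_def by measurable
  have "AE x in \<rho>. (1 + k \<bullet> x) *\<^sub>R \<phi> (Th k x) = (1 + h \<bullet> x) *\<^sub>R \<psi> (Th h x)"
    using hpos knonneg
  proof eventually_elim
    case (elim x)
    define a b where "a = 1 + h \<bullet> x" and "b = 1 + k \<bullet> x"
    have a: "a > 0" and shift: "1 + (k - h) \<bullet> Th h x = b / a"
      using elim inner_diff_Th[of h x k] by (simp_all add: a_def b_def)
    show ?case
    proof (cases "b > 0")
      case True
      then have "Th h x \<in> S"
        using a by (simp add: S_def shift)
      moreover have "(1 / (b / a)) *\<^sub>R Th h x = Th k x"
        using a True by (simp add: Th_def a_def b_def)
      ultimately show ?thesis
        using a by (simp add: \<psi>_def shift flip: a_def b_def)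
    next
      case False
      then have "b = 0"
        using elim by (simp add: b_def)
      then show ?thesis
        by (simp add: \<psi>_def shift flip: a_def b_def)
    qed
  qed
  then have "(\<integral>x. (1 + k \<bullet> x) *\<^sub>R \<phi> (Th k x) \<partial>\<rho>) = (\<integral>x. (1 + h \<bullet> x) *\<^sub>R \<psi> (Th h x) \<partial>\<rho>)"
    by (rule integral_cong_AE[rotated 2]) simp_all
  moreover have "AE x in \<rho>. 0 \<le> 1 + h \<bullet> x"
    using hpos by eventually_elim simp
  ultimately have "(\<integral>z. \<phi> z \<partial>eta \<rho> k) = (\<integral>y. \<psi> y \<partial>eta \<rho> h)"
    using knonneg by (simp add: integral_eta[OF sets])
  then show ?thesis
    unfolding set_lebesgue_integral_def \<psi>_def S_def .
qed

lemma has_bounded_support_eta: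
  assumes [measurable_cong]: "sets \<rho> = sets borel"
    and "e > 0"
    and bound: "AE x in \<rho>. e * norm x \<le> 1 + g \<bullet> x"
  shows "has_bounded_support (eta \<rho> g)"
  unfolding has_bounded_support_def
proof (intro exI conjI)
  have "AE x in \<rho>. 0 < ennreal (1 + g \<bullet> x) \<longrightarrow> Th g x \<in> cball 0 (1 / e)"
    using bound by eventually_elim (simp add: norm_Th_le \<open>e > 0\<close>)
  then have "AE x in qh \<rho> g. Th g x \<in> cball 0 (1 / e)"
    unfolding qh_def by (subst AE_density) simp_all
  then show "AE y in eta \<rho> g. y \<in> cball 0 (1 / e)"
    unfolding eta_def by (subst AE_distr_iff) (simp_all add: qh_def)
qed simp

theorem proposition3p4:
  fixes H :: "real^'n^'m" and \<rho> :: "(real^'n) measure" and h k :: "real^'n"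
  assumes "CARD('m) = CARD('n) + 1"
    and "admissible_H H"
    and "anchored H \<rho>"
    and "h \<in> interior (Hcal H)"
    and "k \<in> Hcal H"
  shows "has_bochner_integral (eta \<rho> h) (\<lambda>y. y) 0 \<and>
         (\<forall>\<phi> :: real^'n \<Rightarrow> real. \<phi> \<in> borel_measurable borel \<longrightarrow> bounded (range \<phi>) \<longrightarrow>
          (\<integral>z. \<phi> z \<partial>eta \<rho> k) =
          (LINT y:{y. 1 + (k - h) \<bullet> y > 0}|eta \<rho> h.
              \<phi> ((1 / (1 + (k - h) \<bullet> y)) *\<^sub>R y) * (1 + (k - h) \<bullet> y))) \<and>
         has_bounded_support (eta \<rho> h)"
proof -
  have sets: "sets \<rho> = sets borel" and Xd: "AE x in \<rho>. x \<in> Xd H"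
    and mean: "has_bochner_integral \<rho> (\<lambda>x. x) 0"
    using assms(3) unfolding anchored_def by auto
  obtain e where "e > 0" and bound: "\<And>x. x \<in> Xd H \<Longrightarrow> e * norm x \<le> 1 + h \<bullet> x"
    using interior_Hcal_inner_Xd_lower_bound[OF assms(4)] by blast
  have hbound: "AE x in \<rho>. e * norm x \<le> 1 + h \<bullet> x"
    using Xd by eventually_elim (rule bound)
  then have hpos: "AE x in \<rho>. 0 < 1 + h \<bullet> x"
    by eventually_elim (rule pos_if_norm_le_affine[OF \<open>e > 0\<close>])
  have knonneg: "AE x in \<rho>. 0 \<le> 1 + k \<bullet> x"
    using Xd by eventually_elim (rule Hcal_inner_Xd_nonneg[OF assms(5)])
  show ?thesis
    using has_bochner_integral_eta_mean[OF sets hpos mean]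
      integral_eta_change_center[OF sets _ hpos knonneg]
      has_bounded_support_eta[OF sets \<open>e > 0\<close> hbound]
    by blast
qed

end
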